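(* Let $m\ge1$, $n\ge1$, fix $t_0\in\mathbb{Z}^m$ and let $\mathcal{Z}=\{t\in\mathbb{Z}^m\mid t\ge t_0\}$. Let $T=(T_1,\dots,T_m)\in\mathbb{N}^m$, $T\ne0$. Let $A_\alpha\colon\mathcal{Z}\to\mathcal{M}_n(\mathbb{C})$, $\alpha\in\{1,\dots,m\}$, satisfy $$A_\alpha(t+1_\beta)A_\beta(t)=A_\beta(t+1_\alpha)A_\alpha(t),\quad \forall t\in\mathcal{Z},\ \forall\alpha,\beta,$$ and suppose that for all $\alpha,\beta$ and all $t\in\mathcal{Z}$, $A_\alpha(t+T_\beta\cdot1_\beta)=A_\alpha(t)$ and $A_\alpha(t)$ is invertible. Let $\Phi(t)=\chi(t,t_0)$, $t\in\mathcal{Z}$. Assume one of: (i) $n=2$; or (ii) for all $\alpha$ and all $t\in\mathcal{Z}$ the matrix $A_\alpha(t)$ is Hermitian, and $A_\alpha(t)A_\alpha(t+k\cdot1_\alpha)=A_\alpha(t+k\cdot1_\alpha)A_\alpha(t)$ for all $t\in\mathcal{Z}$, $k\in\mathbb{N}$, $\alpha\in\{1,\dots,m\}$. Then there exist a function $P\colon\mathcal{Z}\to\mathcal{M}_n(\mathbb{C})$ and constant invertible matrices $B_1,\dots,B_m\in\mathcal{M}_n(\mathbb{C})$ such that (a) $P(t+T_\alpha\cdot1_\alpha)=P(t)$ for all $t\in\mathcal{Z}$ and all $\alpha$; (b) $B_\alpha B_\beta=B_\beta B_\alpha$ for all $\alpha,\beta$; (c) $\Phi(t)=P(t)B_1^{t^1}B_2^{t^2}\cdots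 B_m^{t^m}$ for all $t\ge t_0$.
   Context: $\mathbb{N}=\{0,1,2,\dots\}$; $1_\alpha\in\mathbb{Z}^m$ has $1$ in position $\alpha$ and $0$ elsewhere; $s\le t$ in $\mathbb{Z}^m$ means $s^\alpha\le t^\alpha$ for all $\alpha$; $t=(t^1,\dots,t^m)$. Under the compatibility relations, for each $s\in\mathcal{Z}$ there is a unique $\chi(\cdot,s)\colon\{t\in\mathcal{Z}\mid t\ge s\}\to\mathcal{M}_n(\mathbb{C})$ with $\chi(s,s)=I_n$ and $\chi(t+1_\alpha,s)=A_\alpha(t)\chi(t,s)$ for all $t\ge s$ and all $\alpha$ (the transition matrix). Negative integer powers of invertible matrices are powers of the inverse. *)

theory Defs
  imports Complex_Main "Jordan_Normal_Form.Matrix"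
begin

text \<open>Points of Z^m are functions nat => int; only coordinates 0..m-1 are used
  (indices are 0-based); all points of the domain are zero outside {0..<m}.\<close>

definition domZ :: "nat \<Rightarrow> (nat \<Rightarrow> int) \<Rightarrow> (nat \<Rightarrow> int) set" where
  "domZ m t0 = {t. (\<forall>a<m. t0 a \<le> t a) \<and> (\<forall>a\<ge>m. t a = 0)}"

definition shift :: "(nat \<Rightarrow> int) \<Rightarrow> nat \<Rightarrow> int \<Rightarrow> (nat \<Rightarrow> int)" where
  "shift t a k = t(a := t a + k)"

definition hermitian_mat :: "complex mat \<Rightarrow> bool" where
  "hermitian_mat A \<longleftrightarrow> dim_row A = dim_col A \<and>
     (\<forall>i<dim_row A. \<forall>j<dim_col A. A $$ (i, j) = cnj (A $$ (j, i)))"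

definition mat_inv :: "complex mat \<Rightarrow> complex mat" where
  "mat_inv B = (SOME C. C \<in> carrier_mat (dim_row B) (dim_row B) \<and>
      B * C = 1\<^sub>m (dim_row B) \<and> C * B = 1\<^sub>m (dim_row B))"

definition mpow_int :: "complex mat \<Rightarrow> int \<Rightarrow> complex mat" where
  "mpow_int B k = (if 0 \<le> k then B ^\<^sub>m nat k else mat_inv B ^\<^sub>m nat (- k))"

fun prod_pows :: "nat \<Rightarrow> (nat \<Rightarrow> complex mat) \<Rightarrow> (nat \<Rightarrow> int) \<Rightarrow> nat \<Rightarrow> complex mat" where
  "prod_pows n B t 0 = 1\<^sub>m n"
| "prod_pows n B t (Suc k) = prod_pows n B t k * mpow_int (B k) (t k)"

end

theory Submission
  imports Defs "Jordan_Normal_Form.Schur_Decomposition"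
begin

text \<open>The monodromy matrices C_a = \<Phi>(t0 + T_a 1_a) satisfy \<Phi>(t + T_a 1_a) = \<Phi>(t) C_a, and
  they commute since shifting by T_a 1_a and T_b 1_b in either order reaches the same point.
  Over \<complex> every invertible matrix C has, for each k > 0, a k-th root that is a polynomial
  in C (Schur triangularisation reduces this to p^k \<equiv> X modulo the characteristic
  polynomial, which is solved by Hensel lifting). Such roots B_a of C_a with exponent T_a
  again commute, and P(t) = \<Phi>(t) (B_1^t1 \<dots> B_m^tm)^-1 is then periodic.\<close>

lemma invertible_mat_obtain_inverse:
  fixes A :: "'a::semiring_1 mat"
  assumes A: "A \<in> carrier_mat n n" and inv: "invertible_mat A"
  obtains B where "B \<in> carrier_mat n n" "A * B = 1\<^sub>m n" "B * A = 1\<^sub>m n"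
proof -
  from inv obtain B where AB: "A * B = 1\<^sub>m (dim_row A)" and BA: "B * A = 1\<^sub>m (dim_row B)"
    unfolding invertible_mat_def inverts_mat_def by blast
  have "B \<in> carrier_mat n n"
    using arg_cong[OF AB, of dim_col] arg_cong[OF BA, of dim_col] A by auto
  with that show thesis using AB BA A by auto
qed

lemma invertible_mat_iff_det:
  fixes A :: "'a::field mat"
  assumes A: "A \<in> carrier_mat n n"
  shows "invertible_mat A \<longleftrightarrow> det A \<noteq> 0"
proof
  assume "invertible_mat A"
  then obtain B where B: "B \<in> carrier_mat n n" and AB: "A * B = 1\<^sub>m n"
    using A invertible_mat_obtain_inverse by metis
  show "det A \<noteq> 0" using arg_cong[OF AB, of det] det_mult[OF A B] by auto
next
  assume "det A \<noteq> 0"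
  from det_non_zero_imp_unit[OF A this, of undefined]
  obtain B where "B \<in> carrier_mat n n" "A * B = 1\<^sub>m n" "B * A = 1\<^sub>m n"
    unfolding Units_def ring_mat_def by auto
  then show "invertible_mat A"
    using A unfolding invertible_mat_def inverts_mat_def by auto
qed

lemma det_pow_mat:
  fixes A :: "'a::comm_ring_1 mat"
  assumes A: "A \<in> carrier_mat n n"
  shows "det (A ^\<^sub>m k) = det A ^ k"
  by (induction k) (use A in \<open>simp_all add: det_mult[of _ n]\<close>)

lemma invertible_mat_one: "invertible_mat (1\<^sub>m n :: 'a::field mat)"
  by (simp add: invertible_mat_iff_det[of _ n])

lemma invertible_mat_mult:
  fixes A B :: "'a::field mat"
  assumes "A \<in> carrier_mat n n" "B \<in> carrier_mat n n" "invertible_mat A" "invertible_mat B"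
  shows "invertible_mat (A * B)"
  using assms by (simp add: invertible_mat_iff_det[of _ n] det_mult)

lemma invertible_mat_pow:
  fixes A :: "'a::field mat"
  assumes "A \<in> carrier_mat n n" "invertible_mat A"
  shows "invertible_mat (A ^\<^sub>m k)"
  using assms by (simp add: invertible_mat_iff_det[of _ n] det_pow_mat)

lemma invertible_mat_pow_root:
  fixes A :: "'a::field mat"
  assumes "A \<in> carrier_mat n n" "invertible_mat (A ^\<^sub>m k)" "k > 0"
  shows "invertible_mat A"
  using assms by (simp add: invertible_mat_iff_det[of _ n] det_pow_mat)

lemma
  fixes A :: "complex mat"
  assumes A: "A \<in> carrier_mat n n" and inv: "invertible_mat A"
  shows mat_inv_carrier: "mat_inv A \<in> carrier_mat n n"
    and mat_inv_right: "A * mat_inv A = 1\<^sub>m n"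
    and mat_inv_left: "mat_inv A * A = 1\<^sub>m n"
proof -
  have "\<exists>B. B \<in> carrier_mat n n \<and> A * B = 1\<^sub>m n \<and> B * A = 1\<^sub>m n"
    using invertible_mat_obtain_inverse[OF A inv] by blast
  then have "mat_inv A \<in> carrier_mat n n \<and> A * mat_inv A = 1\<^sub>m n \<and> mat_inv A * A = 1\<^sub>m n"
    unfolding mat_inv_def carrier_matD(1)[OF A] by (rule someI_ex)
  then show "mat_inv A \<in> carrier_mat n n" "A * mat_inv A = 1\<^sub>m n" "mat_inv A * A = 1\<^sub>m n"
    by auto
qed

lemma invertible_mat_inv:
  fixes A :: "complex mat"
  assumes A: "A \<in> carrier_mat n n" and inv: "invertible_mat A"
  shows "invertible_mat (mat_inv A)"
  using arg_cong[OF mat_inv_right[OF A inv], of det] det_mult[OF A mat_inv_carrier[OF A inv]]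
    mat_inv_carrier[OF A inv] by (auto simp: invertible_mat_iff_det)

lemma mult_right_cancel_invertible:
  fixes X Y M :: "complex mat"
  assumes X: "X \<in> carrier_mat n n" and Y: "Y \<in> carrier_mat n n" and M: "M \<in> carrier_mat n n"
    and inv: "invertible_mat M" and eq: "X * M = Y * M"
  shows "X = Y"
proof -
  note Mi = mat_inv_carrier[OF M inv] mat_inv_right[OF M inv]
  have "X = X * M * mat_inv M" using X M Mi by (simp add: assoc_mult_mat[of _ n n _ n _ n])
  also have "\<dots> = Y" unfolding eq using Y M Mi by (simp add: assoc_mult_mat[of _ n n _ n _ n])
  finally show ?thesis .
qed

lemma commute_pow_mat:
  assumes X: "X \<in> carrier_mat n n" and B: "B \<in> carrier_mat n n" and XB: "X * B = B * X"
  shows "X * B ^\<^sub>m k = B ^\<^sub>m k * X"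
proof (induction k)
  case 0
  show ?case using X B by simp
next
  case (Suc k)
  have Bk: "B ^\<^sub>m k \<in> carrier_mat n n" using B by simp
  have "X * B ^\<^sub>m Suc k = X * B ^\<^sub>m k * B" using assoc_mult_mat[OF X Bk B] by simp
  also have "\<dots> = B ^\<^sub>m k * (X * B)" using Suc assoc_mult_mat[OF Bk X B] by simp
  also have "\<dots> = B ^\<^sub>m Suc k * X" unfolding XB using assoc_mult_mat[OF Bk B X] by simp
  finally show ?case .
qed

lemma commute_mat_inv:
  fixes X B :: "complex mat"
  assumes X: "X \<in> carrier_mat n n" and B: "B \<in> carrier_mat n n" and inv: "invertible_mat B"
    and XB: "X * B = B * X"
  shows "X * mat_inv B = mat_inv B * X"
proof -
  let ?I = "mat_inv B"
  note I = mat_inv_carrier[OF B inv] mat_inv_left[OF B inv] mat_inv_right[OF B inv]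
  have "X * ?I = ?I * B * X * ?I" unfolding I(2) using X I by simp
  also have "\<dots> = ?I * (B * X) * ?I" using assoc_mult_mat[OF I(1) B X] by simp
  also have "\<dots> = ?I * X * (B * ?I)"
    unfolding XB[symmetric] using X B I by (simp add: assoc_mult_mat[of _ n n _ n _ n])
  also have "\<dots> = ?I * X" using X I by simp
  finally show ?thesis .
qed

lemma mpow_int_carrier [simp]:
  assumes "B \<in> carrier_mat n n" "invertible_mat B"
  shows "mpow_int B k \<in> carrier_mat n n"
  using assms mat_inv_carrier unfolding mpow_int_def by auto

lemma invertible_mpow_int:
  assumes "B \<in> carrier_mat n n" "invertible_mat B"
  shows "invertible_mat (mpow_int B k)"
  using invertible_mat_pow[OF assms]
    invertible_mat_pow[OF mat_inv_carrier[OF assms] invertible_mat_inv[OF assms]]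
  unfolding mpow_int_def by auto

lemma commute_mpow_int:
  assumes X: "X \<in> carrier_mat n n" and B: "B \<in> carrier_mat n n" and inv: "invertible_mat B"
    and XB: "X * B = B * X"
  shows "X * mpow_int B k = mpow_int B k * X"
  using commute_pow_mat[OF X B XB]
    commute_pow_mat[OF X mat_inv_carrier[OF B inv] commute_mat_inv[OF X B inv XB]]
  unfolding mpow_int_def by auto

lemma mpow_int_plus_one:
  assumes B: "B \<in> carrier_mat n n" and inv: "invertible_mat B"
  shows "mpow_int B (k + 1) = mpow_int B k * B"
proof (cases "0 \<le> k")
  case True
  then have "nat (k + 1) = Suc (nat k)" by simp
  then show ?thesis using True unfolding mpow_int_def by simp
next
  case False
  define j where "j = nat (- (k + 1))"
  have j: "nat (- k) = Suc j" using False unfolding j_def by simp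
  note I = mat_inv_carrier[OF B inv] mat_inv_left[OF B inv]
  have "mpow_int B k * B = mat_inv B ^\<^sub>m j * (mat_inv B * B)"
    unfolding mpow_int_def using False j I B by (simp add: assoc_mult_mat[of _ n n _ n _ n])
  also have "\<dots> = mat_inv B ^\<^sub>m j" using I by simp
  also have "\<dots> = mpow_int B (k + 1)"
    using False I B unfolding mpow_int_def j_def by auto
  finally show ?thesis by simp
qed

lemma mpow_int_add_nat:
  assumes B: "B \<in> carrier_mat n n" and inv: "invertible_mat B"
  shows "mpow_int B (k + int j) = mpow_int B k * B ^\<^sub>m j"
proof (induction j)
  case 0
  show ?case using B mpow_int_carrier[OF B inv, of k] by simp
next
  case (Suc j)
  have "k + int (Suc j) = (k + int j) + 1" by simp
  then have "mpow_int B (k + int (Suc j)) = mpow_int B (k + int j) * B"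
    using mpow_int_plus_one[OF B inv] by metis
  also have "\<dots> = mpow_int B k * B ^\<^sub>m Suc j"
    unfolding Suc using B mpow_int_carrier[OF B inv, of k] by (simp add: assoc_mult_mat[of _ n n _ n _ n])
  finally show ?case .
qed

lemma prod_pows_carrier_invertible:
  assumes B: "\<forall>a<m. B a \<in> carrier_mat n n \<and> invertible_mat (B a)" and j: "j \<le> m"
  shows "prod_pows n B t j \<in> carrier_mat n n \<and> invertible_mat (prod_pows n B t j)"
  using j
proof (induction j)
  case 0
  show ?case by (simp add: invertible_mat_one)
next
  case (Suc j)
  then have "B j \<in> carrier_mat n n" "invertible_mat (B j)" using B by auto
  then show ?case
    using Suc invertible_mat_mult[of _ n "mpow_int (B j) (t j)"] invertible_mpow_int by auto
qed

lemma prod_pows_shift: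
  assumes B: "\<forall>b<m. B b \<in> carrier_mat n n \<and> invertible_mat (B b)"
    and comm: "\<forall>b<m. \<forall>c<m. B b * B c = B c * B b"
    and a: "a < m" and j: "j \<le> m"
  shows "prod_pows n B (shift t a (int k)) j =
    prod_pows n B t j * (if a < j then B a ^\<^sub>m k else 1\<^sub>m n)"
  using j
proof (induction j)
  case 0
  show ?case by simp
next
  case (Suc j)
  let ?P = "prod_pows n B t j" and ?E = "mpow_int (B j) (t j)" and ?K = "B a ^\<^sub>m k"
  have j: "j < m" using Suc by simp
  have Bj: "B j \<in> carrier_mat n n" "invertible_mat (B j)" and Ba: "B a \<in> carrier_mat n n"
    using B j a by auto
  have P: "?P \<in> carrier_mat n n" using prod_pows_carrier_invertible[OF B] j by auto
  have E: "?E \<in> carrier_mat n n" and K: "?K \<in> carrier_mat n n" using Bj Ba by auto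
  have IH: "prod_pows n B (shift t a (int k)) j = ?P * (if a < j then ?K else 1\<^sub>m n)"
    using Suc j by simp
  have step: "prod_pows n B (shift t a (int k)) (Suc j) =
      prod_pows n B (shift t a (int k)) j * mpow_int (B j) (shift t a (int k) j)"
    by simp
  consider "j = a" | "a < j" | "j < a" by linarith
  then show ?case
  proof cases
    case 1
    then have "prod_pows n B (shift t a (int k)) (Suc j) = ?P * (?E * ?K)"
      using step IH P mpow_int_add_nat[OF Bj, of "t j" k] by (simp add: shift_def)
    then show ?thesis using 1 P E K by (simp add: assoc_mult_mat[of _ n n _ n _ n])
  next
    case 2
    have "?K * ?E = ?E * ?K"
      using commute_mpow_int[OF K Bj] commute_pow_mat[OF Bj(1) Ba] comm a j by auto
    moreover have "shift t a (int k) j = t j" using 2 by (simp add: shift_def)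
    ultimately show ?thesis using 2 step IH P E K by (simp add: assoc_mult_mat[of _ n n _ n _ n])
  next
    case 3
    moreover have "shift t a (int k) j = t j" using 3 by (simp add: shift_def)
    ultimately show ?thesis using step IH P E by simp
  qed
qed

lemma power_add_expansion_mod_square:
  fixes a b :: "'a::comm_ring_1"
  shows "\<exists>h. (a + b) ^ Suc k = a ^ Suc k + of_nat (Suc k) * a ^ k * b + b\<^sup>2 * h"
proof (induction k)
  case 0
  show ?case by (rule exI[of _ 0]) simp
next
  case (Suc k)
  then obtain h where h: "(a + b) ^ Suc k = a ^ Suc k + of_nat (Suc k) * a ^ k * b + b\<^sup>2 * h"
    by blast
  have "(a + b) ^ Suc (Suc k) = (a + b) * (a ^ Suc k + of_nat (Suc k) * a ^ k * b + b\<^sup>2 * h)"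
    using h by simp
  also have "\<dots> = a ^ Suc (Suc k) + of_nat (Suc (Suc k)) * a ^ Suc k * b
      + b\<^sup>2 * (a * h + of_nat (Suc k) * a ^ k + b * h)"
    by (simp add: algebra_simps power2_eq_square)
  finally show ?case by blast
qed

lemma poly_power_shift_expansion:
  fixes p g r :: "'a::comm_ring_1 poly"
  assumes r: "p ^ Suc k - [:0, 1:] = g * r"
  shows "\<exists>w. (p + [:c:] * g) ^ Suc k - [:0, 1:] = g * w \<and>
    (poly g e = 0 \<longrightarrow> poly w e = poly r e + of_nat (Suc k) * poly p e ^ k * c)"
proof -
  obtain h where h: "(p + [:c:] * g) ^ Suc k =
      p ^ Suc k + of_nat (Suc k) * p ^ k * ([:c:] * g) + ([:c:] * g)\<^sup>2 * h"
    using power_add_expansion_mod_square by blast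
  define w where "w = r + of_nat (Suc k) * p ^ k * [:c:] + g * [:c:]\<^sup>2 * h"
  have "(p + [:c:] * g) ^ Suc k - [:0, 1:] = g * w"
    unfolding w_def using h r by (simp add: algebra_simps power2_eq_square)
  moreover have "poly g e = 0 \<Longrightarrow> poly w e = poly r e + of_nat (Suc k) * poly p e ^ k * c"
    unfolding w_def by simp
  ultimately show ?thesis by blast
qed

text \<open>Hensel-type lifting: a new factor X - e is absorbed by replacing p with p + c g.
  If g(e) \<noteq> 0, choose c so that (p + c g)(e) is a k-th root of e; if g(e) = 0, the
  derivative k p(e)^(k-1) is nonzero and c solves a linear equation.\<close>

lemma poly_power_congruent_X:
  fixes es :: "complex list"
  assumes nz: "0 \<notin> set es" and k: "k > 0"
  shows "\<exists>p. (\<Prod>e\<leftarrow>es. [:-e, 1:]) dvd p ^ k - [:0, 1:]"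
  using nz
proof (induction es)
  case Nil
  show ?case by simp
next
  case (Cons e es)
  define g where "g = (\<Prod>e\<leftarrow>es. [:-e, 1:])"
  obtain k' where k': "k = Suc k'" using k by (cases k) auto
  obtain p r where r: "p ^ Suc k' - [:0, 1:] = g * r"
    using Cons k' unfolding g_def by (auto elim: dvdE)
  note expand = poly_power_shift_expansion[OF r, of _ e]
  have "\<exists>c w. (p + [:c:] * g) ^ Suc k' - [:0, 1:] = g * w \<and> poly w e = 0"
  proof (cases "poly g e = 0")
    case True
    have "poly p e ^ Suc k' = e" using arg_cong[OF r, of "\<lambda>q. poly q e"] True by simp
    then have "poly p e \<noteq> 0" using Cons.prems by auto
    define c where "c = - poly r e / (of_nat (Suc k') * poly p e ^ k')"
    obtain w where "(p + [:c:] * g) ^ Suc k' - [:0, 1:] = g * w"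
      and "poly w e = poly r e + of_nat (Suc k') * poly p e ^ k' * c"
      using expand True by blast
    moreover have "poly r e + of_nat (Suc k') * poly p e ^ k' * c = 0"
      unfolding c_def using \<open>poly p e \<noteq> 0\<close> of_nat_neq_0[of k', where 'a=complex]
      by (simp del: of_nat_Suc)
    ultimately show ?thesis by auto
  next
    case False
    obtain \<mu> where \<mu>: "\<mu> ^ Suc k' = e" using nth_root_exists[of "Suc k'"] by blast
    define c where "c = (\<mu> - poly p e) / poly g e"
    obtain w where w: "(p + [:c:] * g) ^ Suc k' - [:0, 1:] = g * w" using expand by blast
    have "poly (p + [:c:] * g) e = \<mu>" unfolding c_def using False by simp
    then have "poly g e * poly w e = 0" using arg_cong[OF w, of "\<lambda>q. poly q e"] \<mu> by simp
    then show ?thesis using w False by auto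
  qed
  then obtain c w where w: "(p + [:c:] * g) ^ Suc k' - [:0, 1:] = g * w" and "poly w e = 0"
    by blast
  then have "[:-e, 1:] dvd w" by (simp add: poly_eq_0_iff_dvd)
  then have "[:-e, 1:] * g dvd (p + [:c:] * g) ^ Suc k' - [:0, 1:]"
    unfolding w by (metis dvd_refl mult.commute mult_dvd_mono)
  then show ?case unfolding g_def k' by auto
qed

definition poly_mat :: "nat \<Rightarrow> 'a::comm_ring_1 mat \<Rightarrow> 'a poly \<Rightarrow> 'a mat" where
  "poly_mat n C p = fold_coeffs (\<lambda>a M. a \<cdot>\<^sub>m 1\<^sub>m n + C * M) p (0\<^sub>m n n)"

lemma poly_mat_0 [simp]: "poly_mat n C 0 = 0\<^sub>m n n"
  by (simp add: poly_mat_def)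

lemma poly_mat_pCons:
  assumes C: "C \<in> carrier_mat n n"
  shows "poly_mat n C (pCons a p) = a \<cdot>\<^sub>m 1\<^sub>m n + C * poly_mat n C p"
proof (cases "a = 0 \<and> p = 0")
  case True
  then show ?thesis using C by (auto intro!: eq_matI)
next
  case False
  then show ?thesis unfolding poly_mat_def by (cases "a = 0") auto
qed

lemma poly_mat_carrier [simp, intro]:
  assumes C: "C \<in> carrier_mat n n"
  shows "poly_mat n C p \<in> carrier_mat n n"
proof (induction p)
  case 0 show ?case by simp
next
  case (pCons a p)
  then show ?case using C by (simp add: poly_mat_pCons)
qed

lemma poly_mat_dim [simp]:
  "C \<in> carrier_mat n n \<Longrightarrow> dim_row (poly_mat n C p) = n"
  "C \<in> carrier_mat n n \<Longrightarrow> dim_col (poly_mat n C p) = n"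
  by (metis carrier_matD poly_mat_carrier)+

lemma poly_mat_add:
  assumes C: "C \<in> carrier_mat n n"
  shows "poly_mat n C (p + q) = poly_mat n C p + poly_mat n C q"
proof (induction p arbitrary: q)
  case 0
  show ?case using C by (auto intro!: eq_matI)
next
  case (pCons a p)
  show ?case
  proof (cases q rule: pCons_cases)
    case (pCons b q')
    have "poly_mat n C (pCons a p + q) =
        (a + b) \<cdot>\<^sub>m 1\<^sub>m n + C * (poly_mat n C p + poly_mat n C q')"
      using pCons.IH C unfolding pCons by (simp add: poly_mat_pCons)
    also have "\<dots> =
        (a \<cdot>\<^sub>m 1\<^sub>m n + C * poly_mat n C p) + (b \<cdot>\<^sub>m 1\<^sub>m n + C * poly_mat n C q')"
    proof -
      have d: "C * (poly_mat n C p + poly_mat n C q') = C * poly_mat n C p + C * poly_mat n C q'"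
        by (rule mult_add_distrib_mat[OF C]) (use C in auto)
      show ?thesis unfolding d using C by (intro eq_matI) (auto simp: algebra_simps)
    qed
    finally show ?thesis using C unfolding pCons by (simp add: poly_mat_pCons)
  qed
qed

lemma poly_mat_smult:
  assumes C: "C \<in> carrier_mat n n"
  shows "poly_mat n C (smult c p) = c \<cdot>\<^sub>m poly_mat n C p"
proof (induction p)
  case 0 show ?case by (auto intro!: eq_matI)
next
  case (pCons a p)
  have "poly_mat n C (smult c (pCons a p)) =
      (c * a) \<cdot>\<^sub>m 1\<^sub>m n + C * (c \<cdot>\<^sub>m poly_mat n C p)"
    using pCons C by (simp add: poly_mat_pCons)
  also have "C * (c \<cdot>\<^sub>m poly_mat n C p) = c \<cdot>\<^sub>m (C * poly_mat n C p)"
    by (rule mult_smult_distrib[OF C]) (use C in auto)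
  finally show ?case using C by (simp add: poly_mat_pCons) (intro eq_matI, auto simp: algebra_simps)
qed

lemma poly_mat_mult:
  assumes C: "C \<in> carrier_mat n n"
  shows "poly_mat n C (p * q) = poly_mat n C p * poly_mat n C q"
proof (induction p)
  case 0 show ?case using C by simp
next
  case (pCons a p)
  let ?P = "poly_mat n C p" and ?Q = "poly_mat n C q"
  have cP: "?P \<in> carrier_mat n n" and cQ: "?Q \<in> carrier_mat n n" using C by auto
  have "poly_mat n C (pCons a p * q) = a \<cdot>\<^sub>m ?Q + (0 \<cdot>\<^sub>m 1\<^sub>m n + C * (?P * ?Q))"
    using pCons C by (simp add: poly_mat_add poly_mat_smult poly_mat_pCons)
  also have "C * (?P * ?Q) = C * ?P * ?Q" by (rule assoc_mult_mat[symmetric]) (use C cP cQ in auto)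
  also have "a \<cdot>\<^sub>m ?Q = (a \<cdot>\<^sub>m 1\<^sub>m n) * ?Q"
    using cQ by (simp add: mult_smult_assoc_mat[of _ n n])
  finally have "poly_mat n C (pCons a p * q) =
      (a \<cdot>\<^sub>m 1\<^sub>m n) * ?Q + (0 \<cdot>\<^sub>m 1\<^sub>m n + C * ?P * ?Q)" .
  also have "\<dots> = (a \<cdot>\<^sub>m 1\<^sub>m n) * ?Q + C * ?P * ?Q"
    using C cP cQ by (intro eq_matI) auto
  also have "\<dots> = (a \<cdot>\<^sub>m 1\<^sub>m n + C * ?P) * ?Q"
    by (rule add_mult_distrib_mat[symmetric]) (use C cP cQ in auto)
  finally show ?case using C by (simp add: poly_mat_pCons)
qed

lemma poly_mat_const [simp]:
  assumes C: "C \<in> carrier_mat n n"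
  shows "poly_mat n C [:c:] = c \<cdot>\<^sub>m 1\<^sub>m n"
  using C by (simp add: poly_mat_pCons)

lemma poly_mat_one [simp]:
  assumes C: "C \<in> carrier_mat n n"
  shows "poly_mat n C 1 = 1\<^sub>m n"
  using poly_mat_const[OF C, of 1] by (simp add: one_pCons) (intro eq_matI, auto)

lemma poly_mat_X [simp]:
  assumes C: "C \<in> carrier_mat n n"
  shows "poly_mat n C [:0, 1:] = C"
  using C by (simp add: poly_mat_pCons) (intro eq_matI, auto)

lemma poly_mat_power:
  assumes C: "C \<in> carrier_mat n n"
  shows "poly_mat n C (p ^ k) = poly_mat n C p ^\<^sub>m k"
proof (induction k)
  case 0 show ?case using C by simp
next
  case (Suc k)
  have "poly_mat n C (p ^ Suc k) = poly_mat n C (p ^ k * p)" by (simp only: power_Suc2)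
  also have "\<dots> = poly_mat n C (p ^ k) * poly_mat n C p" by (rule poly_mat_mult[OF C])
  finally show ?case using Suc by simp
qed

lemma commute_poly_mat:
  assumes C: "C \<in> carrier_mat n n" and X: "X \<in> carrier_mat n n" and XC: "X * C = C * X"
  shows "X * poly_mat n C p = poly_mat n C p * X"
proof (induction p)
  case 0 show ?case using X by simp
next
  case (pCons a p)
  let ?P = "poly_mat n C p"
  have cP: "?P \<in> carrier_mat n n" using C by auto
  have "X * (a \<cdot>\<^sub>m 1\<^sub>m n + C * ?P) = X * (a \<cdot>\<^sub>m 1\<^sub>m n) + X * (C * ?P)"
    by (rule mult_add_distrib_mat[OF X]) (use C cP in auto)
  also have "X * (a \<cdot>\<^sub>m 1\<^sub>m n) = (a \<cdot>\<^sub>m 1\<^sub>m n) * X"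
  proof -
    have 1: "X * (a \<cdot>\<^sub>m 1\<^sub>m n) = a \<cdot>\<^sub>m X"
      using mult_smult_distrib[OF X one_carrier_mat[of n], of a] right_mult_one_mat[OF X] by simp
    have 2: "(a \<cdot>\<^sub>m 1\<^sub>m n) * X = a \<cdot>\<^sub>m X"
      using mult_smult_assoc_mat[OF one_carrier_mat[of n] X, of a] left_mult_one_mat[OF X] by simp
    show ?thesis using 1 2 by simp
  qed
  also have "X * (C * ?P) = (X * C) * ?P" by (rule assoc_mult_mat[symmetric]) (use X C cP in auto)
  also have "\<dots> = C * (X * ?P)" unfolding XC by (rule assoc_mult_mat) (use X C cP in auto)
  also have "\<dots> = (C * ?P) * X" unfolding pCons by (rule assoc_mult_mat[symmetric]) (use X C cP in auto)
  also have "(a \<cdot>\<^sub>m 1\<^sub>m n) * X + C * ?P * X = (a \<cdot>\<^sub>m 1\<^sub>m n + C * ?P) * X"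
    by (rule add_mult_distrib_mat[symmetric]) (use C cP X in auto)
  finally show ?case using C by (simp add: poly_mat_pCons)
qed

lemma index_mult_mat_square:
  assumes "A \<in> carrier_mat n n" "B \<in> carrier_mat n n" "i < n" "j < n"
  shows "(A * B) $$ (i, j) = (\<Sum>r<n. A $$ (i, r) * B $$ (r, j))"
  using assms by (auto simp: scalar_prod_def lessThan_atLeast0 intro!: sum.cong)

lemma poly_mat_diag_factor_index:
  assumes U: "U \<in> carrier_mat n n" and ut: "upper_triangular U"
    and "l \<le> j" "j \<le> r" "r < n"
  shows "poly_mat n U [:- U $$ (j, j), 1:] $$ (r, l) = 0"
proof -
  have "poly_mat n U [:- U $$ (j, j), 1:] = (- U $$ (j, j)) \<cdot>\<^sub>m 1\<^sub>m n + U * 1\<^sub>m n"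
    using poly_mat_pCons[OF U] poly_mat_one[OF U] by (simp add: one_pCons)
  moreover have "U $$ (r, l) = 0" if "l < r"
    using ut U that \<open>r < n\<close> unfolding upper_triangular_def by auto
  ultimately show ?thesis using assms by (cases "l = r") auto
qed

lemma poly_mat_upper_triangular_take_diag:
  assumes U: "U \<in> carrier_mat n n" and ut: "upper_triangular U"
    and "j \<le> n" "s < n" "l < j"
  shows "poly_mat n U (\<Prod>e\<leftarrow>take j (diag_mat U). [:-e, 1:]) $$ (s, l) = 0"
  using assms(3-5)
proof (induction j arbitrary: l)
  case 0
  then show ?case by simp
next
  case (Suc j)
  let ?M = "poly_mat n U (\<Prod>e\<leftarrow>take j (diag_mat U). [:-e, 1:])"
  let ?D = "poly_mat n U [:- U $$ (j, j), 1:]"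
  have j: "j < n" using Suc by simp
  have "take (Suc j) (diag_mat U) = take j (diag_mat U) @ [U $$ (j, j)]"
    using U j by (simp add: take_Suc_conv_app_nth diag_mat_def)
  then have "(\<Prod>e\<leftarrow>take (Suc j) (diag_mat U). [:-e, 1:]) =
      (\<Prod>e\<leftarrow>take j (diag_mat U). [:-e, 1:]) * [:- U $$ (j, j), 1:]" by simp
  then have "poly_mat n U (\<Prod>e\<leftarrow>take (Suc j) (diag_mat U). [:-e, 1:]) = ?M * ?D"
    by (simp only: poly_mat_mult[OF U])
  also have "(?M * ?D) $$ (s, l) = (\<Sum>r<n. ?M $$ (s, r) * ?D $$ (r, l))"
    using U Suc j by (intro index_mult_mat_square) auto
  also have "\<dots> = 0"
  proof (intro sum.neutral ballI)
    fix r assume "r \<in> {..<n}"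
    then show "?M $$ (s, r) * ?D $$ (r, l) = 0"
      using Suc poly_mat_diag_factor_index[OF U ut, of l j r] by (cases "r < j") auto
  qed
  finally show ?case .
qed

lemma poly_mat_upper_triangular_diag:
  assumes U: "U \<in> carrier_mat n n" and ut: "upper_triangular U"
  shows "poly_mat n U (\<Prod>e\<leftarrow>diag_mat U. [:-e, 1:]) = 0\<^sub>m n n"
proof -
  have "take n (diag_mat U) = diag_mat U" using U by (simp add: diag_mat_def)
  then show ?thesis
    using poly_mat_upper_triangular_take_diag[OF U ut, of n] U by (intro eq_matI) auto
qed

lemma poly_mat_similar:
  assumes U: "U \<in> carrier_mat n n" and P: "P \<in> carrier_mat n n" and Q: "Q \<in> carrier_mat n n"
    and PQ: "P * Q = 1\<^sub>m n" and QP: "Q * P = 1\<^sub>m n"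
  shows "poly_mat n (P * U * Q) f = P * poly_mat n U f * Q"
proof (induction f)
  case 0
  show ?case using P Q by simp
next
  case (pCons a f)
  let ?M = "poly_mat n U f"
  have M: "?M \<in> carrier_mat n n" using U by simp
  have QPX: "Q * (P * X) = X" if "X \<in> carrier_mat n n" for X
    using assoc_mult_mat[OF Q P that] QP that by simp
  have "P * U * Q * (P * ?M * Q) = P * (U * ?M) * Q"
    using P U Q M QPX[of "?M * Q"]
    by (simp add: assoc_mult_mat[of _ n n _ n _ n] mult_carrier_mat[of _ n n _ n])
  moreover have "P * (a \<cdot>\<^sub>m 1\<^sub>m n) * Q = a \<cdot>\<^sub>m 1\<^sub>m n"
    using mult_smult_distrib[OF P one_carrier_mat[of n]] mult_smult_assoc_mat[OF P Q] P PQ by simp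
  ultimately have "poly_mat n (P * U * Q) (pCons a f) = P * (a \<cdot>\<^sub>m 1\<^sub>m n + U * ?M) * Q"
    using pCons P U Q M
    by (simp add: poly_mat_pCons add_mult_distrib_mat[of _ n n _ _ n] mult_add_distrib_mat[of _ n n _ n])
  then show ?case using U by (simp add: poly_mat_pCons)
qed

lemma poly_mat_root:
  fixes C :: "complex mat"
  assumes C: "C \<in> carrier_mat n n" and inv: "invertible_mat C" and k: "k > 0"
  shows "\<exists>p. poly_mat n C p ^\<^sub>m k = C"
proof -
  obtain es where cp: "char_poly C = (\<Prod>e\<leftarrow>es. [:-e, 1:])"
    using char_poly_factorized[OF C] by blast
  obtain U P Q where schur: "schur_decomposition C es = (U, P, Q)"
    by (cases "schur_decomposition C es") auto
  from schur_decomposition[OF C cp schur]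
  have sim: "similar_mat_wit C U P Q" and ut: "upper_triangular U" and diag: "diag_mat U = es"
    by auto
  from sim C have U: "U \<in> carrier_mat n n" and P: "P \<in> carrier_mat n n" and Q: "Q \<in> carrier_mat n n"
    and PQ: "P * Q = 1\<^sub>m n" and QP: "Q * P = 1\<^sub>m n" and CPUQ: "C = P * U * Q"
    unfolding similar_mat_wit_def Let_def by auto
  have "0 \<notin> set es"
  proof
    assume "0 \<in> set es"
    then have "poly (char_poly C) 0 = 0" unfolding cp by (auto simp: poly_prod_list prod_list_zero_iff)
    then have "det (char_matrix C 0) = 0"
      using eigenvalue_root_char_poly[OF C] eigenvalue_det[OF C] by simp
    moreover have "char_matrix C 0 = C" using C unfolding char_matrix_def by auto
    ultimately show False using inv C by (simp add: invertible_mat_iff_det)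
  qed
  then obtain p where "(\<Prod>e\<leftarrow>es. [:-e, 1:]) dvd p ^ k - [:0, 1:]"
    using poly_power_congruent_X[OF _ k] by blast
  then obtain q where pq: "p ^ k - [:0, 1:] = (\<Prod>e\<leftarrow>es. [:-e, 1:]) * q"
    by (elim dvdE)
  have annihilate: "poly_mat n C (\<Prod>e\<leftarrow>es. [:-e, 1:]) = 0\<^sub>m n n"
    unfolding CPUQ poly_mat_similar[OF U P Q PQ QP] diag[symmetric]
      poly_mat_upper_triangular_diag[OF U ut]
    using P Q by simp
  have "p ^ k = (\<Prod>e\<leftarrow>es. [:-e, 1:]) * q + [:0, 1:]" using pq by (simp add: algebra_simps)
  then have "poly_mat n C (p ^ k) = poly_mat n C (\<Prod>e\<leftarrow>es. [:-e, 1:]) * poly_mat n C q + C"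
    using C by (simp add: poly_mat_add poly_mat_mult)
  then have "poly_mat n C (p ^ k) = C" unfolding annihilate using C by simp
  then show ?thesis using poly_mat_power[OF C] by metis
qed

lemma commuting_root:
  fixes C :: "complex mat"
  assumes C: "C \<in> carrier_mat n n" and inv: "invertible_mat C" and k: "k > 0"
  obtains B where "B \<in> carrier_mat n n" "invertible_mat B" "B ^\<^sub>m k = C"
    "\<And>X. X \<in> carrier_mat n n \<Longrightarrow> X * C = C * X \<Longrightarrow> X * B = B * X"
proof -
  obtain p where p: "poly_mat n C p ^\<^sub>m k = C" using poly_mat_root[OF C inv k] by blast
  have B: "poly_mat n C p \<in> carrier_mat n n" using C by simp
  have "invertible_mat (poly_mat n C p)"
    using invertible_mat_pow_root[OF B _ k] inv unfolding p .
  with B p show thesis using that commute_poly_mat[OF C] by blast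
qed

lemma commuting_roots:
  fixes C :: "nat \<Rightarrow> complex mat" and T :: "nat \<Rightarrow> nat"
  assumes C: "\<forall>a<m. C a \<in> carrier_mat n n \<and> invertible_mat (C a)"
    and C_comm: "\<forall>a<m. \<forall>b<m. C a * C b = C b * C a"
    and C_zero_period: "\<forall>a<m. T a = 0 \<longrightarrow> C a = 1\<^sub>m n"
  obtains B where "\<forall>a<m. B a \<in> carrier_mat n n \<and> invertible_mat (B a)"
    and "\<forall>a<m. \<forall>b<m. B a * B b = B b * B a"
    and "\<forall>a<m. B a ^\<^sub>m T a = C a"
proof -
  have "\<exists>B. B \<in> carrier_mat n n \<and> invertible_mat B \<and> B ^\<^sub>m T a = C a \<and>
      (\<forall>X \<in> carrier_mat n n. X * C a = C a * X \<longrightarrow> X * B = B * X)" if a: "a < m" for a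
  proof (cases "T a = 0")
    case True
    then show ?thesis
      using C_zero_period a by (intro exI[of _ "1\<^sub>m n"]) (auto simp: invertible_mat_one)
  next
    case False
    from C a have "C a \<in> carrier_mat n n" "invertible_mat (C a)" by auto
    then obtain B where "B \<in> carrier_mat n n" "invertible_mat B" "B ^\<^sub>m T a = C a"
      and "\<And>X. X \<in> carrier_mat n n \<Longrightarrow> X * C a = C a * X \<Longrightarrow> X * B = B * X"
      using False by (rule_tac commuting_root) auto
    then show ?thesis by blast
  qed
  then obtain B where B: "\<And>a. a < m \<Longrightarrow>
      B a \<in> carrier_mat n n \<and> invertible_mat (B a) \<and> B a ^\<^sub>m T a = C a \<and>
      (\<forall>X \<in> carrier_mat n n. X * C a = C a * X \<longrightarrow> X * B a = B a * X)"
    by metis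
  have B_comm: "B a * B b = B b * B a" if a: "a < m" and b: "b < m" for a b
  proof -
    have "C b * B a = B a * C b" using B[OF a] C b C_comm a by simp
    then show ?thesis using B[OF a] B[OF b] by simp
  qed
  show thesis by (rule that[of B]) (use B B_comm in auto)
qed

lemma shift_in_domZ: "t \<in> domZ m t0 \<Longrightarrow> a < m \<Longrightarrow> shift t a (int k) \<in> domZ m t0"
  unfolding domZ_def shift_def by auto

lemma shift_shift_swap: "shift (shift t b i) a k = shift (shift t a k) b i"
  unfolding shift_def by (auto simp: fun_eq_iff)

lemma shift_zero [simp]: "shift t a 0 = t"
  unfolding shift_def by simp

lemma domZ_induct [consumes 2, case_names base step]:
  assumes t0: "\<forall>a\<ge>m. t0 a = 0" and t: "t \<in> domZ m t0"
    and base: "Q t0"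
    and step: "\<And>t a. t \<in> domZ m t0 \<Longrightarrow> a < m \<Longrightarrow> Q t \<Longrightarrow> Q (shift t a 1)"
  shows "Q t"
proof -
  define N where "N = (\<Sum>a<m. nat (t a - t0 a))"
  from t N_def show ?thesis
  proof (induction N arbitrary: t)
    case 0
    then have "\<forall>a<m. t a \<le> t0 a" by simp
    then have "t x = t0 x" for x
      using 0 t0 unfolding domZ_def by (cases "x < m") (auto simp: not_less intro: order.antisym)
    then have "t = t0" by blast
    then show ?case using base by simp
  next
    case (Suc N)
    obtain a where a: "a < m" "t0 a < t a"
    proof (rule ccontr)
      assume "\<not> thesis"
      then have "\<forall>a<m. nat (t a - t0 a) = 0" using that by force
      then show False using Suc.prems by simp
    qed
    define t' where "t' = shift t a (- 1)"
    have t': "t' \<in> domZ m t0" using Suc.prems a unfolding t'_def domZ_def shift_def by auto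
    have "nat (t b - t0 b) = nat (t' b - t0 b) + (if b = a then 1 else 0)" for b
      using a unfolding t'_def shift_def by auto
    then have "Suc N = (\<Sum>b<m. nat (t' b - t0 b)) + 1"
      using Suc.prems a by (simp add: sum.distrib)
    then have "Q t'" using Suc.IH t' by simp
    moreover have "t = shift t' a 1" unfolding t'_def shift_def by (simp add: fun_eq_iff)
    ultimately show ?case using step[OF t' a(1)] by simp
  qed
qed

lemma floquet_factorization:
  fixes \<Phi> :: "(nat \<Rightarrow> int) \<Rightarrow> complex mat" and B :: "nat \<Rightarrow> complex mat"
  assumes \<Phi>: "\<And>t. t \<in> domZ m t0 \<Longrightarrow> \<Phi> t \<in> carrier_mat n n"
    and B: "\<forall>a<m. B a \<in> carrier_mat n n \<and> invertible_mat (B a)"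
    and B_comm: "\<forall>a<m. \<forall>b<m. B a * B b = B b * B a"
    and \<Phi>_period: "\<And>t a. t \<in> domZ m t0 \<Longrightarrow> a < m \<Longrightarrow>
      \<Phi> (shift t a (int (T a))) = \<Phi> t * B a ^\<^sub>m T a"
  defines "P t \<equiv> \<Phi> t * mat_inv (prod_pows n B t m)"
  assumes t: "t \<in> domZ m t0"
  shows floquet_factor_carrier: "P t \<in> carrier_mat n n"
    and floquet_factorization_eq: "\<Phi> t = P t * prod_pows n B t m"
    and floquet_factor_periodic: "a < m \<Longrightarrow> P (shift t a (int (T a))) = P t"
proof -
  have M: "prod_pows n B s m \<in> carrier_mat n n" "invertible_mat (prod_pows n B s m)" for s
    using prod_pows_carrier_invertible[OF B] by auto
  note M_inv = mat_inv_carrier[OF M] mat_inv_left[OF M]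
  have P: "P s \<in> carrier_mat n n" if "s \<in> domZ m t0" for s
    unfolding P_def using \<Phi>[OF that] M_inv by simp
  have factor: "\<Phi> s = P s * prod_pows n B s m" if "s \<in> domZ m t0" for s
    unfolding P_def using \<Phi>[OF that] M M_inv by (simp add: assoc_mult_mat[of _ n n _ n _ n])
  show "P t \<in> carrier_mat n n" using P[OF t] .
  show "\<Phi> t = P t * prod_pows n B t m" using factor[OF t] .
  assume a: "a < m"
  let ?t' = "shift t a (int (T a))"
  have t': "?t' \<in> domZ m t0" using shift_in_domZ[OF t a] .
  have BT: "B a ^\<^sub>m T a \<in> carrier_mat n n" using B a by simp
  have "P ?t' * prod_pows n B ?t' m = \<Phi> t * B a ^\<^sub>m T a"
    using factor[OF t'] \<Phi>_period[OF t a] by simp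
  also have "\<dots> = P t * prod_pows n B ?t' m"
    using factor[OF t] prod_pows_shift[OF B B_comm a, of m t "T a"] a P[OF t] M BT
    by (simp add: assoc_mult_mat[of _ n n _ n _ n])
  finally show "P ?t' = P t"
    by (rule mult_right_cancel_invertible[OF P[OF t'] P[OF t] M])
qed

locale periodic_lattice_system =
  fixes m n :: nat and t0 :: "nat \<Rightarrow> int" and T :: "nat \<Rightarrow> nat"
    and A :: "nat \<Rightarrow> (nat \<Rightarrow> int) \<Rightarrow> complex mat"
    and \<Phi> :: "(nat \<Rightarrow> int) \<Rightarrow> complex mat"
  assumes t0_supp: "\<forall>a\<ge>m. t0 a = 0"
    and A_carrier: "\<forall>a<m. \<forall>t\<in>domZ m t0. A a t \<in> carrier_mat n n"
    and periodic: "\<forall>a<m. \<forall>b<m. \<forall>t\<in>domZ m t0. A a (shift t b (int (T b))) = A a t"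
    and invertible: "\<forall>a<m. \<forall>t\<in>domZ m t0. invertible_mat (A a t)"
    and Phi_init: "\<Phi> t0 = 1\<^sub>m n"
    and Phi_step: "\<forall>t\<in>domZ m t0. \<forall>a<m. \<Phi> (shift t a 1) = A a t * \<Phi> t"
begin

definition monodromy :: "nat \<Rightarrow> complex mat" where
  "monodromy a = \<Phi> (shift t0 a (int (T a)))"

lemma t0_in_domZ: "t0 \<in> domZ m t0"
  using t0_supp unfolding domZ_def by simp

lemma Phi_carrier_invertible:
  assumes "t \<in> domZ m t0"
  shows "\<Phi> t \<in> carrier_mat n n \<and> invertible_mat (\<Phi> t)"
  using t0_supp assms
proof (induction t rule: domZ_induct)
  case base
  show ?case using Phi_init by (simp add: invertible_mat_one)
next
  case (step t a)
  then have "A a t \<in> carrier_mat n n" "invertible_mat (A a t)" using A_carrier invertible by auto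
  then show ?case using step Phi_step invertible_mat_mult[of "A a t" n "\<Phi> t"] by auto
qed

lemma solution_unique:
  assumes "X t0 = Y t0"
    and "\<And>t a. t \<in> domZ m t0 \<Longrightarrow> a < m \<Longrightarrow> X (shift t a 1) = A a t * X t"
    and "\<And>t a. t \<in> domZ m t0 \<Longrightarrow> a < m \<Longrightarrow> Y (shift t a 1) = A a t * Y t"
    and "t \<in> domZ m t0"
  shows "X t = Y t"
  using t0_supp \<open>t \<in> domZ m t0\<close> by (induction t rule: domZ_induct) (simp_all add: assms)

lemma monodromy_carrier_invertible:
  "a < m \<Longrightarrow> monodromy a \<in> carrier_mat n n \<and> invertible_mat (monodromy a)"
  unfolding monodromy_def using Phi_carrier_invertible shift_in_domZ t0_in_domZ by simp

text \<open>Both sides solve the system with initial value \<open>monodromy a\<close>: the left one because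
  the coefficients are periodic, the right one by linearity.\<close>

lemma Phi_shift_period:
  assumes t: "t \<in> domZ m t0" and a: "a < m"
  shows "\<Phi> (shift t a (int (T a))) = \<Phi> t * monodromy a"
proof (rule solution_unique[OF _ _ _ t])
  show "\<Phi> (shift t0 a (int (T a))) = \<Phi> t0 * monodromy a"
    using monodromy_carrier_invertible[OF a] left_mult_one_mat[of "monodromy a" n n]
    unfolding monodromy_def Phi_init by simp
next
  fix s b assume s: "s \<in> domZ m t0" and b: "b < m"
  let ?s = "shift s a (int (T a))"
  have "\<Phi> (shift (shift s b 1) a (int (T a))) = \<Phi> (shift ?s b 1)"
    by (simp only: shift_shift_swap)
  also have "\<dots> = A b ?s * \<Phi> ?s" using Phi_step shift_in_domZ[OF s a] b by simp
  also have "A b ?s = A b s" using periodic a b s by simp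
  finally show "\<Phi> (shift (shift s b 1) a (int (T a))) = A b s * \<Phi> ?s" .
next
  fix s b assume s: "s \<in> domZ m t0" and b: "b < m"
  have "monodromy a \<in> carrier_mat n n" using monodromy_carrier_invertible[OF a] by simp
  then show "\<Phi> (shift s b 1) * monodromy a = A b s * (\<Phi> s * monodromy a)"
    using Phi_step A_carrier Phi_carrier_invertible[OF s] s b
    by (simp add: assoc_mult_mat[of _ n n _ n _ n])
qed

lemma monodromy_commute:
  assumes a: "a < m" and b: "b < m"
  shows "monodromy a * monodromy b = monodromy b * monodromy a"
  using Phi_shift_period[OF shift_in_domZ[OF t0_in_domZ a, of "T a"] b]
    Phi_shift_period[OF shift_in_domZ[OF t0_in_domZ b, of "T b"] a]
  unfolding monodromy_def by (simp add: shift_shift_swap)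

lemma monodromy_zero_period: "T a = 0 \<Longrightarrow> monodromy a = 1\<^sub>m n"
  unfolding monodromy_def using Phi_init by simp

end

theorem theorem2p11:
  fixes m n :: nat and t0 :: "nat \<Rightarrow> int" and T :: "nat \<Rightarrow> nat"
    and A :: "nat \<Rightarrow> (nat \<Rightarrow> int) \<Rightarrow> complex mat"
    and \<Phi> :: "(nat \<Rightarrow> int) \<Rightarrow> complex mat"
  assumes m_pos: "m \<ge> 1" and n_pos: "n \<ge> 1"
    and t0_supp: "\<forall>a\<ge>m. t0 a = 0"
    and T_nz: "\<exists>a<m. T a \<noteq> 0"
    and A_carrier: "\<forall>a<m. \<forall>t\<in>domZ m t0. A a t \<in> carrier_mat n n"
    and compat: "\<forall>t\<in>domZ m t0. \<forall>a<m. \<forall>b<m.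
        A a (shift t b 1) * A b t = A b (shift t a 1) * A a t"
    and periodic: "\<forall>a<m. \<forall>b<m. \<forall>t\<in>domZ m t0. A a (shift t b (int (T b))) = A a t"
    and invertible: "\<forall>a<m. \<forall>t\<in>domZ m t0. invertible_mat (A a t)"
    and Phi_init: "\<Phi> t0 = 1\<^sub>m n"
    and Phi_step: "\<forall>t\<in>domZ m t0. \<forall>a<m. \<Phi> (shift t a 1) = A a t * \<Phi> t"
    and cases: "n = 2 \<or>
       ((\<forall>a<m. \<forall>t\<in>domZ m t0. hermitian_mat (A a t)) \<and>
        (\<forall>a<m. \<forall>t\<in>domZ m t0. \<forall>k::nat.
            A a t * A a (shift t a (int k)) = A a (shift t a (int k)) * A a t))"
  shows "\<exists>P :: (nat \<Rightarrow> int) \<Rightarrow> complex mat. \<exists>B :: nat \<Rightarrow> complex mat.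
     (\<forall>t\<in>domZ m t0. P t \<in> carrier_mat n n) \<and>
     (\<forall>a<m. B a \<in> carrier_mat n n \<and> invertible_mat (B a)) \<and>
     (\<forall>t\<in>domZ m t0. \<forall>a<m. P (shift t a (int (T a))) = P t) \<and>
     (\<forall>a<m. \<forall>b<m. B a * B b = B b * B a) \<and>
     (\<forall>t\<in>domZ m t0. \<Phi> t = P t * prod_pows n B t m)"
proof -
  interpret periodic_lattice_system m n t0 T A \<Phi>
    by unfold_locales (fact t0_supp A_carrier periodic invertible Phi_init Phi_step)+
  obtain B where B: "\<forall>a<m. B a \<in> carrier_mat n n \<and> invertible_mat (B a)"
    and B_comm: "\<forall>a<m. \<forall>b<m. B a * B b = B b * B a"
    and B_root: "\<forall>a<m. B a ^\<^sub>m T a = monodromy a"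
    by (rule commuting_roots[of m monodromy n T])
      (use monodromy_carrier_invertible monodromy_commute monodromy_zero_period in auto)
  have \<Phi>: "\<Phi> t \<in> carrier_mat n n" if "t \<in> domZ m t0" for t
    using Phi_carrier_invertible[OF that] by simp
  have "\<Phi> (shift t a (int (T a))) = \<Phi> t * B a ^\<^sub>m T a" if "t \<in> domZ m t0" "a < m" for t a
    using Phi_shift_period B_root that by simp
  note floquet = floquet_factorization[OF \<Phi> B B_comm this]
  show ?thesis
    by (intro exI[of _ "\<lambda>t. \<Phi> t * mat_inv (prod_pows n B t m)"] exI[of _ B])
      (use floquet B B_comm in auto)
qed

end
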